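(* Let $Y$, $X$ be real random variables and $\boldsymbol{Z}=(Z_1,\ldots,Z_{k_z})^T$ a random $k_z$-vector, with finite second moments and known joint distribution, satisfying $$Y=X\beta+\boldsymbol{Z}^T\boldsymbol{\gamma}+U,\qquad \operatorname{cov}(\boldsymbol{Z},U)=\boldsymbol{\alpha},$$ where $\beta\in\mathbb{R}$ is unknown, $\boldsymbol{\gamma},\boldsymbol{\alpha}\in\mathbb{R}^{k_z}$ are unknown and $U$ is an unobserved random variable. Assume: (1) (relevance) $\operatorname{cov}(\boldsymbol{Z},X)\neq\boldsymbol{0}$; (2) (sufficient variation) $\boldsymbol{\Sigma}_z:=\operatorname{var}(\boldsymbol{Z})$ is invertible; (3) (invalid instruments) $\gamma_\ell\alpha_\ell=0$ for every $\ell\in\{1,\ldots,k_z\}$; (4) (general partial exogeneity and exclusion) there are known constants $\tilde\delta_j\geq 0$, $j=1,\ldots,s_{k_z}$, such that $\left|(\operatorname{var}(\tilde Z_j))^{-1}\operatorname{cov}(\tilde Z_j,\tilde U)\right|\leq\tilde\delta_j$ for all $j$, where $\tilde U:=Y-X\beta=\boldsymbol{Z}^T\boldsymbol{\gamma}+U$ and $\tilde Z_j$ are the transformed instruments defined in the context. Then: (i) The falsification adaptive set is $$FAS=\left[\min_{j\in\tilde{\mathcal{L}}_{rel}}\frac{\tilde\psi_j}{\tilde\pi_j},\ \max_{j\in\tilde{\mathcal{L}}_{rel}}\frac{\tilde\psi_j}{\tilde\pi_j}\right],$$ where $\tilde{\mathcal{L}}_{rel}=\{j\in\{1,\ldots,s_{k_z}\}:\tilde\pi_j\neq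 0\}$ and $s_{k_z}=k_z2^{k_z-1}$ is the number of all just-identified IV model specifications. (ii) If there is at least one instrument that is relevant and valid, then $\beta\in FAS$, so that $FAS$ is the identified set for $\beta$.
   Context: Transformed just-identifying instruments: for $\ell\in\{1,\ldots,k_z\}$ let $A_{-\ell}=\{1,\ldots,k_z\}\setminus\{\ell\}$ and let $C$ range over all $2^{k_z-1}$ subsets of $A_{-\ell}$ (including $\emptyset$ and $A_{-\ell}$). Define the population linear projection error $Z_{\ell|C}:=Z_\ell-\boldsymbol{Z}_C^T\boldsymbol{\phi}_{C\ell}$, where $\boldsymbol{\phi}_{C\ell}=(\operatorname{var}(\boldsymbol{Z}_C))^{-1}\operatorname{cov}(\boldsymbol{Z}_C,Z_\ell)$ (with $Z_{\ell|\emptyset}=Z_\ell$); it is the just-identifying instrument in the specification where $\boldsymbol{Z}_C$ are included as controls and $\boldsymbol{Z}_{A_{-\ell}\setminus C}$ are omitted. Enumerating all pairs $(\ell,C)$ gives $s_{k_z}=k_z2^{k_z-1}$ variables $\tilde Z_1,\ldots,\tilde Z_{s_{k_z}}$. Set $\tilde\pi_j=(\operatorname{var}(\tilde Z_j))^{-1}\operatorname{cov}(\tilde Z_j,X)$ and $\tilde\psi_j=(\operatorname{var}(\tilde Z_j))^{-1}\operatorname{cov}(\tilde Z_j,Y)$; $\tilde Z_j$ is called relevant if $\tilde\pi_j\neq0$. Identified set: for $\tilde{\boldsymbol{\delta}}\in\mathbb{R}^{s_{k_z}}_{\geq0}$, $\mathcal{B}(\tilde{\boldsymbol{\delta}})=\{b\in\mathbb{R}:-\tilde{\boldsymbol{\delta}}\leq\tilde{\boldsymbol{\psi}}-\tilde{\boldsymbol{\pi}}b\leq\tilde{\boldsymbol{\delta}}\}$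 (componentwise). The falsification frontier $FF$ is the set of $\tilde{\boldsymbol{\delta}}\geq0$ with $\mathcal{B}(\tilde{\boldsymbol{\delta}})\neq\emptyset$ but $\mathcal{B}(\tilde{\boldsymbol{\delta}}')=\emptyset$ for every $\tilde{\boldsymbol{\delta}}'<\tilde{\boldsymbol{\delta}}$, where $\tilde{\boldsymbol{\delta}}'<\tilde{\boldsymbol{\delta}}$ means $\tilde\delta'_j\leq\tilde\delta_j$ for all $j$ with strict inequality for some $j$. The falsification adaptive set is $FAS=\bigcup_{\tilde{\boldsymbol{\delta}}\in FF}\mathcal{B}(\tilde{\boldsymbol{\delta}})$. An instrument $Z_\ell$ is valid if $\alpha_\ell=\gamma_\ell=0$. A valid instrument $Z_\ell$ is relevant here if its associated transformed just-identifying instrument $Z_{\ell|C}$, with $C=\{r\neq\ell:\gamma_r\neq0\}$ (the instruments violating exclusion included as controls and those violating exogeneity omitted), satisfies $\operatorname{cov}(Z_{\ell|C},X)\neq 0$. *)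

theory Defs
  imports "HOL-Probability.Probability"
begin

definition covar :: "'a measure \<Rightarrow> ('a \<Rightarrow> real) \<Rightarrow> ('a \<Rightarrow> real) \<Rightarrow> real" where
  "covar M V W = (\<integral>\<omega>. (V \<omega> - (\<integral>\<omega>'. V \<omega>' \<partial>M)) * (W \<omega> - (\<integral>\<omega>'. W \<omega>' \<partial>M)) \<partial>M)"

definition var :: "'a measure \<Rightarrow> ('a \<Rightarrow> real) \<Rightarrow> real" where
  "var M V = covar M V V"

definition finite_second_moment :: "'a measure \<Rightarrow> ('a \<Rightarrow> real) \<Rightarrow> bool" where
  "finite_second_moment M V \<longleftrightarrow> V \<in> borel_measurable M \<and> integrable M (\<lambda>\<omega>. (V \<omega>)\<^sup>2)"

text \<open>Population projection coefficient phi_{C l} = var(Z_C)^{-1} cov(Z_C, Z_l), i.e. the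
  solution of the normal equations var(Z_C) phi = cov(Z_C, Z_l) (zero outside C).\<close>
definition proj_coef :: "'a measure \<Rightarrow> ('k \<Rightarrow> 'a \<Rightarrow> real) \<Rightarrow> 'k set \<Rightarrow> 'k \<Rightarrow> ('k \<Rightarrow> real)" where
  "proj_coef M Z C l = (THE c. (\<forall>r\<in>C. (\<Sum>s\<in>C. covar M (Z r) (Z s) * c s) = covar M (Z r) (Z l))
                             \<and> (\<forall>s. s \<notin> C \<longrightarrow> c s = 0))"

definition Ztilde :: "'a measure \<Rightarrow> ('k \<Rightarrow> 'a \<Rightarrow> real) \<Rightarrow> 'k \<times> 'k set \<Rightarrow> 'a \<Rightarrow> real" where
  "Ztilde M Z lC \<omega> = Z (fst lC) \<omega> - (\<Sum>s\<in>snd lC. Z s \<omega> * proj_coef M Z (snd lC) (fst lC) s)"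

definition spec_index :: "('k::finite \<times> 'k set) set" where
  "spec_index = {(l, C). C \<subseteq> UNIV - {l}}"

definition pi_t :: "'a measure \<Rightarrow> ('k \<Rightarrow> 'a \<Rightarrow> real) \<Rightarrow> ('a \<Rightarrow> real) \<Rightarrow> 'k \<times> 'k set \<Rightarrow> real" where
  "pi_t M Z X j = covar M (Ztilde M Z j) X / var M (Ztilde M Z j)"

definition psi_t :: "'a measure \<Rightarrow> ('k \<Rightarrow> 'a \<Rightarrow> real) \<Rightarrow> ('a \<Rightarrow> real) \<Rightarrow> 'k \<times> 'k set \<Rightarrow> real" where
  "psi_t M Z Y j = covar M (Ztilde M Z j) Y / var M (Ztilde M Z j)"

definition idset :: "'j set \<Rightarrow> ('j \<Rightarrow> real) \<Rightarrow> ('j \<Rightarrow> real) \<Rightarrow> ('j \<Rightarrow> real) \<Rightarrow> real set" where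
  "idset J p q \<delta> = {b. \<forall>j\<in>J. - \<delta> j \<le> q j - p j * b \<and> q j - p j * b \<le> \<delta> j}"

definition fal_frontier :: "'j set \<Rightarrow> ('j \<Rightarrow> real) \<Rightarrow> ('j \<Rightarrow> real) \<Rightarrow> ('j \<Rightarrow> real) set" where
  "fal_frontier J p q = {\<delta>. (\<forall>j\<in>J. 0 \<le> \<delta> j) \<and> (\<forall>j. j \<notin> J \<longrightarrow> \<delta> j = 0)
      \<and> idset J p q \<delta> \<noteq> {}
      \<and> (\<forall>\<delta>'. (\<forall>j\<in>J. 0 \<le> \<delta>' j) \<and> (\<forall>j\<in>J. \<delta>' j \<le> \<delta> j) \<and> (\<exists>j\<in>J. \<delta>' j < \<delta> j)
              \<longrightarrow> idset J p q \<delta>' = {})}"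

definition FAS :: "'j set \<Rightarrow> ('j \<Rightarrow> real) \<Rightarrow> ('j \<Rightarrow> real) \<Rightarrow> real set" where
  "FAS J p q = (\<Union>\<delta>\<in>fal_frontier J p q. idset J p q \<delta>)"

end

theory Submission
  imports Defs
begin

(* Write r_j = psi_j / pi_j. A value b is compatible with a bound vector delta exactly when
   delta dominates its violation vector |psi_j - pi_j b|, so the falsification frontier consists
   of the violation vectors of the Pareto-undominated b, and FAS is the set of those b.
   Outside [min r_j, max r_j] moving b to the nearer endpoint shrinks every violation, while
   inside any move strictly increases the violation of the extreme ratio on the far side.
   For a valid instrument Z_l, the residual of projecting Z_l on the instruments with
   gamma_r <> 0 is uncorrelated with Z^T gamma and with U, so its IV ratio is exactly beta. *)

definition dominated :: "'j set \<Rightarrow> ('j \<Rightarrow> real) \<Rightarrow> ('j \<Rightarrow> real) \<Rightarrow> real \<Rightarrow> bool" where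
  "dominated J p q b \<longleftrightarrow> (\<exists>b'. (\<forall>j\<in>J. \<bar>q j - p j * b'\<bar> \<le> \<bar>q j - p j * b\<bar>)
                             \<and> (\<exists>j\<in>J. \<bar>q j - p j * b'\<bar> < \<bar>q j - p j * b\<bar>))"

lemma mem_idset_iff: "b \<in> idset J p q \<delta> \<longleftrightarrow> (\<forall>j\<in>J. \<bar>q j - p j * b\<bar> \<le> \<delta> j)"
  unfolding idset_def by (auto simp: abs_le_iff)

lemma FAS_eq_undominated: "FAS J p q = {b. \<not> dominated J p q b}"
proof (intro equalityI subsetI CollectI)
  fix b assume "b \<in> FAS J p q"
  then obtain \<delta> where \<delta>: "\<delta> \<in> fal_frontier J p q" and b: "b \<in> idset J p q \<delta>"
    unfolding FAS_def by blast
  show "\<not> dominated J p q b"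
  proof
    assume "dominated J p q b"
    then obtain b' where le: "\<forall>j\<in>J. \<bar>q j - p j * b'\<bar> \<le> \<bar>q j - p j * b\<bar>"
      and lt: "\<exists>j\<in>J. \<bar>q j - p j * b'\<bar> < \<bar>q j - p j * b\<bar>"
      unfolding dominated_def by blast
    let ?\<delta>' = "\<lambda>j. \<bar>q j - p j * b'\<bar>"
    have "\<forall>j\<in>J. ?\<delta>' j \<le> \<delta> j" "\<exists>j\<in>J. ?\<delta>' j < \<delta> j"
      using le lt b unfolding mem_idset_iff by (meson order_trans order_less_le_trans)+
    then have "idset J p q ?\<delta>' = {}"
      using \<delta> unfolding fal_frontier_def by auto
    moreover have "b' \<in> idset J p q ?\<delta>'"
      by (simp add: mem_idset_iff)
    ultimately show False by blast
  qed
next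
  fix b assume "b \<in> {b. \<not> dominated J p q b}"
  then have undominated: "\<not> dominated J p q b" by simp
  define \<delta> where "\<delta> j = (if j \<in> J then \<bar>q j - p j * b\<bar> else 0)" for j
  have b: "b \<in> idset J p q \<delta>"
    by (simp add: mem_idset_iff \<delta>_def)
  have "\<delta> \<in> fal_frontier J p q"
    unfolding fal_frontier_def
  proof (intro CollectI conjI allI impI)
    fix \<delta>' assume \<delta>': "(\<forall>j\<in>J. 0 \<le> \<delta>' j) \<and> (\<forall>j\<in>J. \<delta>' j \<le> \<delta> j) \<and> (\<exists>j\<in>J. \<delta>' j < \<delta> j)"
    show "idset J p q \<delta>' = {}"
    proof (rule ccontr)
      assume "idset J p q \<delta>' \<noteq> {}"
      then obtain b' where "\<forall>j\<in>J. \<bar>q j - p j * b'\<bar> \<le> \<delta>' j"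
        by (auto simp: mem_idset_iff)
      then have "dominated J p q b"
        unfolding dominated_def using \<delta>'
        by (intro exI[of _ b']) (auto simp: \<delta>_def intro: order_trans order_le_less_trans)
      with undominated show False ..
    qed
  qed (use b in \<open>auto simp: \<delta>_def\<close>)
  with b show "b \<in> FAS J p q"
    unfolding FAS_def by blast
qed

lemma abs_diff_mult_eq: "(p::real) \<noteq> 0 \<Longrightarrow> \<bar>q - p * b\<bar> = \<bar>p\<bar> * \<bar>b - q / p\<bar>"
  by (simp add: abs_mult[symmetric] algebra_simps)

lemma abs_diff_mult_le_iff:
  "\<bar>q - p * b'\<bar> \<le> \<bar>q - p * b\<bar> \<longleftrightarrow> ((p::real) \<noteq> 0 \<longrightarrow> \<bar>b' - q / p\<bar> \<le> \<bar>b - q / p\<bar>)"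
  by (cases "p = 0") (simp_all add: abs_diff_mult_eq)

lemma abs_diff_mult_less_iff:
  "\<bar>q - p * b'\<bar> < \<bar>q - p * b\<bar> \<longleftrightarrow> (p::real) \<noteq> 0 \<and> \<bar>b' - q / p\<bar> < \<bar>b - q / p\<bar>"
  by (cases "p = 0") (simp_all add: abs_diff_mult_eq)

lemma dominated_iff_ratios:
  "dominated J p q b \<longleftrightarrow> (\<exists>b'. (\<forall>j\<in>J. p j \<noteq> 0 \<longrightarrow> \<bar>b' - q j / p j\<bar> \<le> \<bar>b - q j / p j\<bar>)
                           \<and> (\<exists>j\<in>J. p j \<noteq> 0 \<and> \<bar>b' - q j / p j\<bar> < \<bar>b - q j / p j\<bar>))"
  unfolding dominated_def abs_diff_mult_le_iff abs_diff_mult_less_iff ..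

lemma undominated_iff_between_ratios:
  fixes J :: "'j set" and p q :: "'j \<Rightarrow> real"
  defines "ratios \<equiv> (\<lambda>j. q j / p j) ` {j\<in>J. p j \<noteq> 0}"
  assumes "finite J" and "{j\<in>J. p j \<noteq> 0} \<noteq> {}"
  shows "\<not> dominated J p q b \<longleftrightarrow> Min ratios \<le> b \<and> b \<le> Max ratios"
proof -
  have fin: "finite ratios" and ne: "ratios \<noteq> {}"
    using assms by (simp_all add: ratios_def)
  have bounds: "Min ratios \<le> q j / p j \<and> q j / p j \<le> Max ratios" if "j \<in> J" "p j \<noteq> 0" for j
    using that fin by (auto simp: ratios_def)
  obtain jmin where jmin: "jmin \<in> J" "p jmin \<noteq> 0" "q jmin / p jmin = Min ratios"
    using Min_in[OF fin ne] by (auto simp: ratios_def)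
  obtain jmax where jmax: "jmax \<in> J" "p jmax \<noteq> 0" "q jmax / p jmax = Max ratios"
    using Max_in[OF fin ne] by (auto simp: ratios_def)
  show ?thesis
  proof
    assume undominated: "\<not> dominated J p q b"
    have "dominated J p q b" if "b < Min ratios"
      unfolding dominated_iff_ratios using that bounds jmin
      by (fastforce intro!: exI[of _ "Min ratios"] bexI[of _ jmin])
    moreover have "dominated J p q b" if "Max ratios < b"
      unfolding dominated_iff_ratios using that bounds jmax
      by (fastforce intro!: exI[of _ "Max ratios"] bexI[of _ jmax])
    ultimately show "Min ratios \<le> b \<and> b \<le> Max ratios"
      using undominated by fastforce
  next
    assume between: "Min ratios \<le> b \<and> b \<le> Max ratios"
    show "\<not> dominated J p q b"
    proof
      assume "dominated J p q b"
      then obtain b' j where le: "\<forall>j\<in>J. p j \<noteq> 0 \<longrightarrow> \<bar>b' - q j / p j\<bar> \<le> \<bar>b - q j / p j\<bar>"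
        and "\<bar>b' - q j / p j\<bar> < \<bar>b - q j / p j\<bar>"
        unfolding dominated_iff_ratios by blast
      then have "b' \<noteq> b" by auto
      then show False
        using le jmin jmax between by (cases b b' rule: linorder_cases) fastforce+
    qed
  qed
qed

lemma FAS_eq_ratio_interval:
  fixes J :: "'j set" and p q :: "'j \<Rightarrow> real"
  assumes "finite J" and "{j\<in>J. p j \<noteq> 0} \<noteq> {}"
  shows "FAS J p q = {Min ((\<lambda>j. q j / p j) ` {j\<in>J. p j \<noteq> 0}) ..
                      Max ((\<lambda>j. q j / p j) ` {j\<in>J. p j \<noteq> 0})}"
  using undominated_iff_between_ratios[OF assms] by (auto simp: FAS_eq_undominated)

lemma ratio_mem_FAS:
  assumes "finite J" "j \<in> J" "p j \<noteq> 0"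
  shows "q j / p j \<in> FAS J p q"
proof -
  have "{j\<in>J. p j \<noteq> 0} \<noteq> {}" and "finite ((\<lambda>j. q j / p j) ` {j\<in>J. p j \<noteq> 0})"
    using assms by auto
  then show ?thesis
    using assms by (auto simp: FAS_eq_ratio_interval intro: Min_le Max_ge)
qed

context finite_measure
begin

lemma finite_second_moment_measurable [measurable_dest]:
  "finite_second_moment M V \<Longrightarrow> V \<in> borel_measurable M"
  by (simp add: finite_second_moment_def)

lemma finite_second_moment_integrable:
  "finite_second_moment M V \<Longrightarrow> integrable M V"
  unfolding finite_second_moment_def by (blast intro: square_integrable_imp_integrable)

lemma finite_second_moment_mult_integrable:
  assumes V: "finite_second_moment M V" and W: "finite_second_moment M W"
  shows "integrable M (\<lambda>\<omega>. V \<omega> * W \<omega>)"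
proof (rule Bochner_Integration.integrable_bound)
  show "integrable M (\<lambda>\<omega>. (V \<omega>)\<^sup>2 + (W \<omega>)\<^sup>2)"
    using V W by (simp add: finite_second_moment_def)
  show "AE \<omega> in M. norm (V \<omega> * W \<omega>) \<le> norm ((V \<omega>)\<^sup>2 + (W \<omega>)\<^sup>2)"
  proof (intro AE_I2)
    fix \<omega>
    have "2 * (\<bar>V \<omega>\<bar> * \<bar>W \<omega>\<bar>) \<le> (V \<omega>)\<^sup>2 + (W \<omega>)\<^sup>2"
      using sum_squares_bound[of "\<bar>V \<omega>\<bar>" "\<bar>W \<omega>\<bar>"] by (simp add: mult.assoc)
    moreover have "0 \<le> \<bar>V \<omega>\<bar> * \<bar>W \<omega>\<bar>" by simp
    ultimately have "\<bar>V \<omega>\<bar> * \<bar>W \<omega>\<bar> \<le> (V \<omega>)\<^sup>2 + (W \<omega>)\<^sup>2" by linarith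
    then show "norm (V \<omega> * W \<omega>) \<le> norm ((V \<omega>)\<^sup>2 + (W \<omega>)\<^sup>2)"
      by (simp add: abs_mult)
  qed
qed (use V W in measurable)

lemma finite_second_moment_const: "finite_second_moment M (\<lambda>\<omega>. c)"
  by (simp add: finite_second_moment_def)

lemma finite_second_moment_mult_const:
  "finite_second_moment M V \<Longrightarrow> finite_second_moment M (\<lambda>\<omega>. V \<omega> * c)"
  by (auto simp: finite_second_moment_def power_mult_distrib)

lemma finite_second_moment_add:
  assumes V: "finite_second_moment M V" and W: "finite_second_moment M W"
  shows "finite_second_moment M (\<lambda>\<omega>. V \<omega> + W \<omega>)"
  using V W finite_second_moment_mult_integrable[OF V W]
  by (auto simp: finite_second_moment_def power2_sum mult.assoc)

lemma finite_second_moment_diff: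
  assumes "finite_second_moment M V" "finite_second_moment M W"
  shows "finite_second_moment M (\<lambda>\<omega>. V \<omega> - W \<omega>)"
  using finite_second_moment_add[OF assms(1) finite_second_moment_mult_const[OF assms(2), of "-1"]]
  by simp

lemma finite_second_moment_sum:
  "(\<And>s. s \<in> S \<Longrightarrow> finite_second_moment M (f s)) \<Longrightarrow>
    finite_second_moment M (\<lambda>\<omega>. \<Sum>s\<in>S. f s \<omega>)"
  by (induction S rule: infinite_finite_induct)
    (auto intro: finite_second_moment_add finite_second_moment_const)

lemma covar_eq_0_if_var_eq_0:
  assumes V: "finite_second_moment M V" and W: "finite_second_moment M W" and "var M W = 0"
  shows "covar M V W = 0"
proof -
  define W' where "W' = (\<lambda>\<omega>. W \<omega> - (\<integral>\<omega>'. W \<omega>' \<partial>M))"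
  have "finite_second_moment M W'"
    unfolding W'_def by (intro finite_second_moment_diff W finite_second_moment_const)
  then have "integrable M (\<lambda>\<omega>. W' \<omega> * W' \<omega>)"
    using finite_second_moment_mult_integrable by blast
  moreover have "(\<integral>\<omega>. W' \<omega> * W' \<omega> \<partial>M) = 0"
    using \<open>var M W = 0\<close> by (simp add: var_def covar_def W'_def)
  ultimately have "AE \<omega> in M. W' \<omega> = 0"
    by (subst (asm) integral_nonneg_eq_0_iff_AE) auto
  then have "covar M V W = (\<integral>\<omega>. 0 \<partial>M)"
    unfolding covar_def W'_def[symmetric] by (intro integral_cong_AE) (use V W in \<open>auto simp: W'_def\<close>)
  then show ?thesis by simp
qed

end

lemma covar_commute: "covar M V W = covar M W V"
  unfolding covar_def by (simp add: mult.commute)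

lemma covar_cong_right:
  "(\<And>\<omega>. \<omega> \<in> space M \<Longrightarrow> W \<omega> = W' \<omega>) \<Longrightarrow> covar M V W = covar M V W'"
  unfolding covar_def by (simp cong: Bochner_Integration.integral_cong)

lemma covar_mult_const_right: "covar M V (\<lambda>\<omega>. W \<omega> * c) = covar M V W * c"
  unfolding covar_def by (simp add: left_diff_distrib[symmetric] mult.assoc[symmetric])

context prob_space
begin

lemma covar_eq:
  assumes V: "finite_second_moment M V" and W: "finite_second_moment M W"
  shows "covar M V W = (\<integral>\<omega>. V \<omega> * W \<omega> \<partial>M) - (\<integral>\<omega>. V \<omega> \<partial>M) * (\<integral>\<omega>. W \<omega> \<partial>M)"
  using finite_second_moment_integrable[OF V] finite_second_moment_integrable[OF W]
    finite_second_moment_mult_integrable[OF V W]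
  by (simp add: covar_def algebra_simps prob_space)

lemma covar_add_right:
  assumes "finite_second_moment M V" "finite_second_moment M W1" "finite_second_moment M W2"
  shows "covar M V (\<lambda>\<omega>. W1 \<omega> + W2 \<omega>) = covar M V W1 + covar M V W2"
  using assms finite_second_moment_add[OF assms(2,3)]
    finite_second_moment_integrable[OF assms(2)] finite_second_moment_integrable[OF assms(3)]
    finite_second_moment_mult_integrable[OF assms(1,2)] finite_second_moment_mult_integrable[OF assms(1,3)]
  by (simp add: covar_eq algebra_simps)

lemma covar_diff_right:
  assumes "finite_second_moment M V" "finite_second_moment M W1" "finite_second_moment M W2"
  shows "covar M V (\<lambda>\<omega>. W1 \<omega> - W2 \<omega>) = covar M V W1 - covar M V W2"
  using covar_add_right[OF assms(1,2) finite_second_moment_mult_const[OF assms(3), of "-1"]]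
    covar_mult_const_right[of M V W2 "-1"]
  by simp

lemma covar_sum_right:
  assumes "finite_second_moment M V" "\<And>s. s \<in> S \<Longrightarrow> finite_second_moment M (f s)"
  shows "covar M V (\<lambda>\<omega>. \<Sum>s\<in>S. f s \<omega>) = (\<Sum>s\<in>S. covar M V (f s))"
  using assms(2)
proof (induction S rule: infinite_finite_induct)
  case (insert x F)
  then show ?case
    by (simp add: covar_add_right assms(1) finite_second_moment_sum)
qed (simp_all add: covar_def)

lemma covar_lincomb_right:
  assumes "finite_second_moment M V" "\<And>s. s \<in> S \<Longrightarrow> finite_second_moment M (Z s)"
  shows "covar M V (\<lambda>\<omega>. \<Sum>s\<in>S. Z s \<omega> * c s) = (\<Sum>s\<in>S. covar M V (Z s) * c s)"
  using assms by (simp add: covar_sum_right finite_second_moment_mult_const covar_mult_const_right)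

end

lemma restricted_linear_system_unique_solution:
  fixes G :: "'k::finite \<Rightarrow> 'k \<Rightarrow> real" and C :: "'k set" and b :: "'k \<Rightarrow> real"
  assumes kernel: "\<And>c. \<forall>r\<in>C. (\<Sum>s\<in>C. G r s * c s) = 0 \<Longrightarrow> \<forall>s. s \<notin> C \<longrightarrow> c s = 0 \<Longrightarrow> c = (\<lambda>_. 0)"
  shows "\<exists>!c. (\<forall>r\<in>C. (\<Sum>s\<in>C. G r s * c s) = b r) \<and> (\<forall>s. s \<notin> C \<longrightarrow> c s = 0)"
proof -
  \<comment> \<open>Extend the system on C by the identity off C to a square system on all of 'k.\<close>
  define A :: "real^'k^'k" where
    "A = (\<chi> r s. if r \<in> C then (if s \<in> C then G r s else 0) else (if r = s then 1 else 0))"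
  have A_apply: "(A *v x) $ r = (if r \<in> C then (\<Sum>s\<in>C. G r s * x $ s) else x $ r)" for x r
  proof (cases "r \<in> C")
    case True
    have "(A *v x) $ r = (\<Sum>s\<in>UNIV. if s \<in> C then G r s * x $ s else 0)"
      using True by (auto simp: A_def matrix_vector_mult_def intro: sum.cong)
    then show ?thesis
      using True by (simp add: sum.If_cases)
  next
    case False
    then show ?thesis
      by (simp add: A_def matrix_vector_mult_def if_distrib[of "\<lambda>v. v * _"] cong: if_cong)
  qed
  have "x = 0" if "A *v x = 0" for x
    using kernel[of "\<lambda>s. x $ s"] that A_apply by (simp add: vec_eq_iff fun_eq_iff) metis
  then have "surj ((*v) A)"
    by (metis invertible_left_inverse invertible_right_inverse matrix_left_invertible_ker
        matrix_right_invertible_surjective)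
  then obtain y where y: "A *v y = (\<chi> r. if r \<in> C then b r else 0)"
    by (metis surjD)
  have y_solves: "(\<forall>r\<in>C. (\<Sum>s\<in>C. G r s * y $ s) = b r) \<and> (\<forall>s. s \<notin> C \<longrightarrow> y $ s = 0)"
    using y A_apply by (simp add: vec_eq_iff) metis
  show ?thesis
  proof (rule ex1I)
    fix c assume c: "(\<forall>r\<in>C. (\<Sum>s\<in>C. G r s * c s) = b r) \<and> (\<forall>s. s \<notin> C \<longrightarrow> c s = 0)"
    have "(\<lambda>s. c s - y $ s) = (\<lambda>_. 0)"
      using c y_solves by (intro kernel) (auto simp: right_diff_distrib sum_subtractf)
    then show "c = (\<lambda>s. y $ s)"
      by (simp add: fun_eq_iff)
  qed (use y_solves in blast)
qed

context prob_space
begin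

lemma normal_equations_homogeneous_imp_zero:
  fixes Z :: "'k::finite \<Rightarrow> 'a \<Rightarrow> real"
  assumes Z: "\<And>i. finite_second_moment M (Z i)"
    and inv: "invertible ((\<chi> i j. covar M (Z i) (Z j)) :: real^'k^'k)"
    and hom: "\<forall>r\<in>C. (\<Sum>s\<in>C. covar M (Z r) (Z s) * c s) = 0"
    and supp: "\<forall>s. s \<notin> C \<longrightarrow> c s = 0"
  shows "c = (\<lambda>_. 0)"
proof -
  define W where "W = (\<lambda>\<omega>. \<Sum>s\<in>C. Z s \<omega> * c s)"
  have fW: "finite_second_moment M W"
    unfolding W_def by (intro finite_second_moment_sum finite_second_moment_mult_const Z)
  have covar_W: "covar M V W = (\<Sum>s\<in>C. covar M V (Z s) * c s)" if "finite_second_moment M V" for V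
    unfolding W_def using that Z by (rule covar_lincomb_right)
  \<comment> \<open>W is uncorrelated with each of its summands, hence has variance 0.\<close>
  have "var M W = (\<Sum>s\<in>C. covar M (Z s) W * c s)"
    unfolding var_def covar_W[OF fW] by (simp add: covar_commute)
  also have "\<dots> = 0"
    using hom by (simp add: covar_W[OF Z])
  finally have W_uncorrelated: "covar M (Z r) W = 0" for r
    using covar_eq_0_if_var_eq_0 Z fW by blast
  have "(\<chi> i j. covar M (Z i) (Z j)) *v (\<chi> s. c s) = (0 :: real^'k)"
    unfolding vec_eq_iff
  proof
    fix r
    have "(\<Sum>s\<in>UNIV. covar M (Z r) (Z s) * c s) = (\<Sum>s\<in>C. covar M (Z r) (Z s) * c s)"
      using supp by (intro sum.mono_neutral_right) auto
    then show "((\<chi> i j. covar M (Z i) (Z j)) *v (\<chi> s. c s)) $ r = (0 :: real^'k) $ r"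
      using W_uncorrelated[of r] by (simp add: matrix_vector_mult_def covar_W[OF Z])
  qed
  then have "(\<chi> s. c s) = (0 :: real^'k)"
    using inv by (simp add: invertible_left_inverse matrix_left_invertible_ker)
  then show ?thesis
    by (simp add: vec_eq_iff fun_eq_iff)
qed

lemma proj_coef_normal_equations:
  fixes Z :: "'k::finite \<Rightarrow> 'a \<Rightarrow> real"
  assumes Z: "\<And>i. finite_second_moment M (Z i)"
    and inv: "invertible ((\<chi> i j. covar M (Z i) (Z j)) :: real^'k^'k)"
  shows "\<forall>r\<in>C. (\<Sum>s\<in>C. covar M (Z r) (Z s) * proj_coef M Z C l s) = covar M (Z r) (Z l)"
proof -
  have "\<exists>!c. (\<forall>r\<in>C. (\<Sum>s\<in>C. covar M (Z r) (Z s) * c s) = covar M (Z r) (Z l))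
             \<and> (\<forall>s. s \<notin> C \<longrightarrow> c s = 0)"
    using normal_equations_homogeneous_imp_zero[OF Z inv]
    by (rule restricted_linear_system_unique_solution)
  then show ?thesis
    unfolding proj_coef_def by (rule theI'[THEN conjunct1])
qed

lemma finite_second_moment_Ztilde:
  fixes Z :: "'k::finite \<Rightarrow> 'a \<Rightarrow> real"
  assumes "\<And>i. finite_second_moment M (Z i)"
  shows "finite_second_moment M (Ztilde M Z j)"
  unfolding Ztilde_def
  by (intro finite_second_moment_diff finite_second_moment_sum finite_second_moment_mult_const assms)

lemma covar_Ztilde:
  fixes Z :: "'k::finite \<Rightarrow> 'a \<Rightarrow> real"
  assumes Z: "\<And>i. finite_second_moment M (Z i)" and W: "finite_second_moment M W"
  shows "covar M (Ztilde M Z (l, C)) W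
     = covar M (Z l) W - (\<Sum>s\<in>C. covar M (Z s) W * proj_coef M Z C l s)"
proof -
  have "covar M W (Ztilde M Z (l, C))
      = covar M W (Z l) - (\<Sum>s\<in>C. covar M W (Z s) * proj_coef M Z C l s)"
    unfolding Ztilde_def fst_conv snd_conv
    by (simp add: covar_diff_right covar_lincomb_right finite_second_moment_sum
        finite_second_moment_mult_const W Z)
  then show ?thesis
    by (simp add: covar_commute)
qed

lemma covar_Ztilde_control:
  fixes Z :: "'k::finite \<Rightarrow> 'a \<Rightarrow> real"
  assumes Z: "\<And>i. finite_second_moment M (Z i)"
    and inv: "invertible ((\<chi> i j. covar M (Z i) (Z j)) :: real^'k^'k)"
    and "r \<in> C"
  shows "covar M (Ztilde M Z (l, C)) (Z r) = 0"
proof -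
  have "covar M (Ztilde M Z (l, C)) (Z r)
      = covar M (Z l) (Z r) - (\<Sum>s\<in>C. covar M (Z s) (Z r) * proj_coef M Z C l s)"
    using Z Z by (rule covar_Ztilde)
  also have "\<dots> = covar M (Z r) (Z l) - (\<Sum>s\<in>C. covar M (Z r) (Z s) * proj_coef M Z C l s)"
    by (simp add: covar_commute[of M _ "Z r"])
  also have "\<dots> = 0"
    using proj_coef_normal_equations[OF Z inv] \<open>r \<in> C\<close> by simp
  finally show ?thesis .
qed

lemma covar_Ztilde_outcome:
  fixes Z :: "'k::finite \<Rightarrow> 'a \<Rightarrow> real"
  assumes Z: "\<And>i. finite_second_moment M (Z i)"
    and inv: "invertible ((\<chi> i j. covar M (Z i) (Z j)) :: real^'k^'k)"
    and X: "finite_second_moment M X" and U: "finite_second_moment M U"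
    and model: "\<And>\<omega>. \<omega> \<in> space M \<Longrightarrow> Y \<omega> = X \<omega> * \<beta> + (\<Sum>i\<in>UNIV. Z i \<omega> * \<gamma> i) + U \<omega>"
    and controls: "\<And>r. \<gamma> r \<noteq> 0 \<Longrightarrow> r \<in> C"
    and exogenous: "covar M (Z l) U = 0" "\<And>s. s \<in> C \<Longrightarrow> covar M (Z s) U = 0"
  shows "covar M (Ztilde M Z (l, C)) Y = covar M (Ztilde M Z (l, C)) X * \<beta>"
proof -
  let ?Zt = "Ztilde M Z (l, C)"
  have Zt: "finite_second_moment M ?Zt"
    using Z by (rule finite_second_moment_Ztilde)
  have "covar M ?Zt (\<lambda>\<omega>. \<Sum>i\<in>UNIV. Z i \<omega> * \<gamma> i) = (\<Sum>i\<in>UNIV. covar M ?Zt (Z i) * \<gamma> i)"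
    using Zt Z by (rule covar_lincomb_right)
  also have "\<dots> = 0"
    using covar_Ztilde_control[OF Z inv] controls by (intro sum.neutral) (metis mult_eq_0_iff)
  finally have included: "covar M ?Zt (\<lambda>\<omega>. \<Sum>i\<in>UNIV. Z i \<omega> * \<gamma> i) = 0" .
  have error: "covar M ?Zt U = 0"
    using exogenous by (simp add: covar_Ztilde Z U)
  have "covar M ?Zt Y = covar M ?Zt (\<lambda>\<omega>. (X \<omega> * \<beta> + (\<Sum>i\<in>UNIV. Z i \<omega> * \<gamma> i)) + U \<omega>)"
    using model by (intro covar_cong_right) simp
  also have "\<dots> = covar M ?Zt X * \<beta>"
    using included error
    by (simp add: covar_add_right covar_mult_const_right finite_second_moment_add
        finite_second_moment_sum finite_second_moment_mult_const Zt X Z U)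
  finally show ?thesis .
qed

lemma pi_t_eq_0_iff:
  fixes Z :: "'k::finite \<Rightarrow> 'a \<Rightarrow> real"
  assumes Z: "\<And>i. finite_second_moment M (Z i)" and X: "finite_second_moment M X"
  shows "pi_t M Z X j = 0 \<longleftrightarrow> covar M (Ztilde M Z j) X = 0"
  using covar_eq_0_if_var_eq_0[OF X finite_second_moment_Ztilde[where Z=Z and j=j, OF Z]]
  by (auto simp: pi_t_def covar_commute)

lemma psi_t_div_pi_t:
  fixes Z :: "'k::finite \<Rightarrow> 'a \<Rightarrow> real"
  assumes Z: "\<And>i. finite_second_moment M (Z i)" and X: "finite_second_moment M X"
    and "covar M (Ztilde M Z j) X \<noteq> 0"
  shows "psi_t M Z Y j / pi_t M Z X j = covar M (Ztilde M Z j) Y / covar M (Ztilde M Z j) X"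
  using assms pi_t_eq_0_iff[where Z=Z and j=j, OF Z X] by (simp add: pi_t_def psi_t_def)

end

lemma card_spec_index: "card (spec_index :: ('k::finite \<times> 'k set) set) = CARD('k) * 2 ^ (CARD('k) - 1)"
proof -
  have spec_index_eq: "(spec_index :: ('k \<times> 'k set) set) = Sigma UNIV (\<lambda>l. Pow (UNIV - {l}))"
    unfolding spec_index_def by auto
  show ?thesis
    unfolding spec_index_eq by (simp add: card_SigmaI card_Pow card_Diff_singleton)
qed

theorem proposition1:
  fixes M :: "'a measure"
    and Y X U :: "'a \<Rightarrow> real"
    and Z :: "'k::finite \<Rightarrow> 'a \<Rightarrow> real"
    and \<beta> :: real
    and \<gamma> \<alpha> :: "'k \<Rightarrow> real"
    and \<delta>t :: "'k \<times> 'k set \<Rightarrow> real"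
  assumes prob: "prob_space M"
    and moments: "finite_second_moment M Y" "finite_second_moment M X"
                 "finite_second_moment M U" "\<And>i. finite_second_moment M (Z i)"
    and model: "\<And>\<omega>. \<omega> \<in> space M \<Longrightarrow> Y \<omega> = X \<omega> * \<beta> + (\<Sum>i\<in>UNIV. Z i \<omega> * \<gamma> i) + U \<omega>"
    and alpha: "\<And>i. covar M (Z i) U = \<alpha> i"
    and relevance: "\<exists>i. covar M (Z i) X \<noteq> 0"
    and suff_var: "invertible ((\<chi> i j. covar M (Z i) (Z j)) :: real^'k^'k)"
    and invalid: "\<And>l. \<gamma> l * \<alpha> l = 0"
    and partial: "\<And>j. j \<in> spec_index \<Longrightarrow> 0 \<le> \<delta>t j"
                 "\<And>j. j \<in> spec_index \<Longrightarrow>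
                    \<bar>covar M (Ztilde M Z j) (\<lambda>\<omega>. Y \<omega> - X \<omega> * \<beta>) / var M (Ztilde M Z j)\<bar> \<le> \<delta>t j"
  shows "card (spec_index :: ('k \<times> 'k set) set) = CARD('k) * 2 ^ (CARD('k) - 1)
    \<and> FAS spec_index (pi_t M Z X) (psi_t M Z Y) =
        {Min ((\<lambda>j. psi_t M Z Y j / pi_t M Z X j) ` {j \<in> spec_index. pi_t M Z X j \<noteq> 0}) ..
         Max ((\<lambda>j. psi_t M Z Y j / pi_t M Z X j) ` {j \<in> spec_index. pi_t M Z X j \<noteq> 0})}
    \<and> ((\<exists>l. \<alpha> l = 0 \<and> \<gamma> l = 0
           \<and> covar M (Ztilde M Z (l, {r. r \<noteq> l \<and> \<gamma> r \<noteq> 0})) X \<noteq> 0)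
       \<longrightarrow> \<beta> \<in> FAS spec_index (pi_t M Z X) (psi_t M Z Y))"
proof -
  interpret prob_space M by (rule prob)
  have relevant_iff: "pi_t M Z X j \<noteq> 0 \<longleftrightarrow> covar M (Ztilde M Z j) X \<noteq> 0" for j
    using pi_t_eq_0_iff[where Z=Z, OF moments(4,2)] by blast
  obtain i where "covar M (Z i) X \<noteq> 0"
    using relevance by blast
  moreover have "Ztilde M Z (i, {}) = Z i"
    by (simp add: Ztilde_def fun_eq_iff)
  ultimately have "(i, {}) \<in> {j \<in> spec_index. pi_t M Z X j \<noteq> 0}"
    by (simp add: spec_index_def relevant_iff)
  then have nonempty: "{j \<in> spec_index. pi_t M Z X j \<noteq> 0} \<noteq> {}"
    by blast
  have "\<beta> \<in> FAS spec_index (pi_t M Z X) (psi_t M Z Y)"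
    if "\<alpha> l = 0" "\<gamma> l = 0" and relevant: "covar M (Ztilde M Z (l, {r. r \<noteq> l \<and> \<gamma> r \<noteq> 0})) X \<noteq> 0"
    for l
  proof -
    let ?j = "(l, {r. r \<noteq> l \<and> \<gamma> r \<noteq> 0})"
    have "covar M (Ztilde M Z ?j) Y = covar M (Ztilde M Z ?j) X * \<beta>"
      using moments(4) suff_var moments(2,3) model
      by (rule covar_Ztilde_outcome) (use that alpha invalid in auto)
    moreover have "?j \<in> spec_index"
      by (auto simp: spec_index_def)
    ultimately show ?thesis
      using ratio_mem_FAS[of spec_index ?j "pi_t M Z X" "psi_t M Z Y"] relevant
      by (simp add: relevant_iff psi_t_div_pi_t[where Z=Z, OF moments(4,2)])
  qed
  then show ?thesis
    using card_spec_index FAS_eq_ratio_interval[OF finite_class.finite nonempty] by blast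
qed

end
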